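(* Let $(p,l)$ be an irregular pair with $\Delta_{(p,l)}\neq0$. Let $r\ge2$ be an integer and let $(p,s_1,\ldots,s_r)\in\widehat{\Psi}^{\rm irr}_r$ be the associated pair of the irregular pair of order $r$ corresponding to $(p,l)$. For $u\ge1$ let $(p,l_u)$ be the irregular pair of order $u$ corresponding to $(p,l)$, and let $A(p^u)=\min_{k\in\mathbb{N}_0}\{m=l_u+k\varphi(p^u): \operatorname{num}(B_m/m)/\operatorname{num}(B_m/(m(m-1)))=p^u\}$. If $(p,s_1,s_2,\ldots,s_r)\neq(p,l,l-1,\ldots,l-1)$, then $A(p^u)$ has no solution (the set is empty) for all $u\ge r$.
   Context: $B_n$ denotes the $n$-th Bernoulli number ($\frac{z}{e^z-1}=\sum_{n\ge0}B_n\frac{z^n}{n!}$); $\operatorname{num}(r)$ is the numerator of a rational number $r$ in lowest terms; $\varphi$ is Euler's function. For an odd prime $p$, $(p,l)$ is an irregular pair if $l$ is even, $2\le l\le p-3$ and $p\mid B_l$. For $n\ge1$, $(p,l)$ is an irregular pair of order $n$ if $l$ is even, $2\le l<\varphi(p^n)$ and $p^n\mid B_l/l$; the set of these is $\Psi^{\rm irr}_n$. For $(p,l)\in\Psi^{\rm irr}_n$ write $l=\sum_{\nu=1}^n s_\nu\varphi(p^{\nu-1})$ with $0\le s_\nu<p$; $(p,s_1,\ldots,s_n)$ is the associated pair and the set of these is $\widehat{\Psi}^{\rm irr}_n$. For an irregular pair $(p,l)$, $\Delta_{(p,l)}$ is the integer in $[0,p)$ with $\Delta_{(p,l)}\equiv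 p^{-1}\left(\frac{B_{l+\varphi(p)}}{l+\varphi(p)}-\frac{B_l}{l}\right)\pmod p$. Known fact (from earlier work): if $\Delta_{(p,l)}\neq0$, there is a unique sequence $(s_\nu)_{\nu\ge1}$ with $s_1=l$ and $(p,s_1,\ldots,s_n)\in\widehat{\Psi}^{\rm irr}_n$ for every $n\ge1$; the corresponding pair $(p,l_n)$ with $l_n=\sum_{\nu=1}^n s_\nu\varphi(p^{\nu-1})$ is the irregular pair of order $n$ corresponding to $(p,l)$. *)

theory Defs
  imports "HOL-Computational_Algebra.Formal_Power_Series" "HOL-Number_Theory.Number_Theory"
begin

definition bernoulli :: "nat \<Rightarrow> rat" where
  "bernoulli n = fact n * fps_nth (fps_X / (fps_exp 1 - 1) :: rat fps) n"

definition num :: "rat \<Rightarrow> int" where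
  "num r = fst (quotient_of r)"

definition rat_dvd :: "int \<Rightarrow> rat \<Rightarrow> bool" where
  "rat_dvd a r \<longleftrightarrow> a dvd num r"

text \<open>Congruence of rationals modulo p: x - y is p-integral and divisible by p.\<close>
definition rat_cong :: "nat \<Rightarrow> rat \<Rightarrow> rat \<Rightarrow> bool" where
  "rat_cong p x y \<longleftrightarrow> rat_dvd (int p) (x - y)"

definition irregular_pair :: "nat \<Rightarrow> nat \<Rightarrow> bool" where
  "irregular_pair p l \<longleftrightarrow> prime p \<and> odd p \<and> even l \<and> 2 \<le> l \<and> l + 3 \<le> p
     \<and> rat_dvd (int p) (bernoulli l)"

definition irregular_pair_order :: "nat \<Rightarrow> nat \<Rightarrow> nat \<Rightarrow> bool" where
  "irregular_pair_order n p l \<longleftrightarrow> prime p \<and> odd p \<and> even l \<and> 2 \<le> l \<and> l < totient (p ^ n)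
     \<and> rat_dvd (int p ^ n) (bernoulli l / of_nat l)"

definition assoc_l :: "nat \<Rightarrow> (nat \<Rightarrow> nat) \<Rightarrow> nat \<Rightarrow> nat" where
  "assoc_l p s n = (\<Sum>\<nu>=1..n. s \<nu> * totient (p ^ (\<nu> - 1)))"

definition assoc_pair :: "nat \<Rightarrow> nat \<Rightarrow> (nat \<Rightarrow> nat) \<Rightarrow> bool" where
  "assoc_pair n p s \<longleftrightarrow> (\<forall>\<nu>\<in>{1..n}. s \<nu> < p) \<and> irregular_pair_order n p (assoc_l p s n)"

definition Delta :: "nat \<Rightarrow> nat \<Rightarrow> nat" where
  "Delta p l = (THE d. d < p \<and>
     rat_cong p ((bernoulli (l + totient p) / of_nat (l + totient p) - bernoulli l / of_nat l) / of_nat p)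
       (of_nat d))"

definition A_set :: "nat \<Rightarrow> nat \<Rightarrow> nat \<Rightarrow> nat set" where
  "A_set p u lu = {m. \<exists>k. m = lu + k * totient (p ^ u) \<and>
     of_int (num (bernoulli m / of_nat m)) / of_int (num (bernoulli m / (of_nat m * (of_nat m - 1))))
       = (of_nat p ^ u :: rat)}"

end

(* If m solves A(p^u), then num (B_m/m) = p^u num (B_m/(m(m-1))); writing B_m/m = a/b in lowest
   terms, the quotient of the two numerators divides m - 1, so p^u | m - 1. As m = l_u + k phi(p^u),
   this gives l_u = 1 (mod p^(u-1)). Since l_u = s_1 + sum_(nu>=2) s_nu p^(nu-2) (p-1) with s_1 = l
   and digits 0 <= s_nu < p, reading this congruence modulo p, p^2, ..., p^(u-1) forces
   s_2 = ... = s_u = l - 1, contrary to the hypothesis. *)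
theory Submission
  imports Defs
begin

lemma num_ratio_dvd:
  fixes x :: rat and c P :: int
  assumes "P \<noteq> 0" and ratio: "of_int (num x) / of_int (num (x / of_int c)) = (of_int P :: rat)"
  shows "P dvd c"
proof -
  obtain a b where ab: "quotient_of x = (a, b)" by (cases "quotient_of x")
  obtain a' b' where ab': "quotient_of (x / of_int c) = (a', b')"
    by (cases "quotient_of (x / of_int c)")
  have "b' \<noteq> 0" using quotient_of_denom_pos[OF ab'] by simp
  have "a' \<noteq> 0"
    using ratio ab' \<open>P \<noteq> 0\<close> by (auto simp: num_def)
  have "of_int a / of_int a' = (of_int P :: rat)"
    using ratio ab ab' by (simp add: num_def)
  then have a: "a = P * a'"
    using \<open>a' \<noteq> 0\<close> by (simp add: divide_eq_eq flip: of_int_mult)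
  have "c \<noteq> 0"
  proof
    assume "c = 0"
    then have "a' = 0" using ab' by simp
    with \<open>a' \<noteq> 0\<close> show False ..
  qed
  have "of_int a / of_int b = x" using quotient_of_div[OF ab] by simp
  also have "x = of_int c * (x / of_int c)" using \<open>c \<noteq> 0\<close> by simp
  also have "x / of_int c = of_int a' / of_int b'" using quotient_of_div[OF ab'] .
  finally have "of_int a / of_int b = (of_int c * of_int a' / of_int b' :: rat)" by simp
  then have "a * b' = c * a' * b"
    using quotient_of_denom_pos[OF ab] \<open>b' \<noteq> 0\<close> by (simp add: frac_eq_eq flip: of_int_mult of_int_eq_iff)
  then have "(P * b') * a' = (c * b) * a'"
    by (simp add: a algebra_simps)
  then have "P dvd c * b"
    using \<open>a' \<noteq> 0\<close> by (metis dvd_triv_left mult_right_cancel)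
  moreover have "coprime P b"
    using quotient_of_coprime[OF ab] by (simp add: a coprime_mult_left_iff)
  ultimately show ?thesis by (simp add: coprime_dvd_mult_left_iff)
qed

lemma mem_A_set_cong:
  assumes "p > 0" and "m \<in> A_set p u lu"
  shows "[m = 1] (mod p ^ u)" and "[m = lu] (mod totient (p ^ u))"
proof -
  obtain k where m: "m = lu + k * totient (p ^ u)" and
    ratio: "of_int (num (bernoulli m / of_nat m)) /
      of_int (num (bernoulli m / (of_nat m * (of_nat m - 1)))) = (of_nat p ^ u :: rat)"
    using assms(2) unfolding A_set_def by blast
  have "bernoulli m / (of_nat m * (of_nat m - 1)) = bernoulli m / of_nat m / of_int (int m - 1)"
    by simp
  then have "int p ^ u dvd int m - 1"
    using ratio \<open>p > 0\<close> by (intro num_ratio_dvd[of "int p ^ u" "bernoulli m / of_nat m"]) simp_all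
  then show "[m = 1] (mod p ^ u)"
    by (simp flip: cong_int_iff add: cong_iff_dvd_diff)
  show "[m = lu] (mod totient (p ^ u))"
    unfolding m by (simp add: cong_add_lcancel_0_nat cong_mult_self_right)
qed

lemma A_set_nonempty_imp_cong_one:
  assumes "prime p" and "u > 0" and "A_set p u lu \<noteq> {}"
  shows "[lu = 1] (mod p ^ (u - 1))"
proof -
  obtain m where m: "m \<in> A_set p u lu" using assms(3) by blast
  have "p > 0" using \<open>prime p\<close> by (simp add: prime_gt_0_nat)
  have "p ^ (u - 1) dvd totient (p ^ u)"
    using assms(1,2) by (simp add: totient_prime_power)
  then have "[lu = m] (mod p ^ (u - 1))"
    using mem_A_set_cong(2)[OF \<open>p > 0\<close> m] by (metis cong_dvd_modulus_nat cong_sym)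
  also have "[m = 1] (mod p ^ (u - 1))"
    using mem_A_set_cong(1)[OF \<open>p > 0\<close> m] by (rule cong_dvd_modulus_nat) (simp add: le_imp_power_dvd)
  finally show ?thesis .
qed

lemma assoc_l_Suc: "assoc_l p s (Suc n) = assoc_l p s n + s (Suc n) * totient (p ^ n)"
  unfolding assoc_l_def by (simp add: sum.cl_ivl_Suc)

lemma assoc_l_cong_prefix:
  assumes "prime p" and "a < u"
  shows "[assoc_l p s u = assoc_l p s (Suc a)] (mod p ^ a)"
proof -
  have "Suc a \<le> u" using \<open>a < u\<close> by simp
  then show ?thesis
  proof (induction u rule: dec_induct)
    case base
    show ?case by simp
  next
    case (step n)
    have "p ^ a dvd p ^ (n - 1) * (p - 1)"
      using step.hyps by (simp add: le_imp_power_dvd)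
    then have "p ^ a dvd s (Suc n) * totient (p ^ n)"
      using \<open>prime p\<close> step.hyps by (simp add: totient_prime_power)
    then have "[assoc_l p s (Suc n) = assoc_l p s n] (mod p ^ a)"
      by (simp add: assoc_l_Suc cong_add_lcancel_0_nat cong_0_iff)
    then show ?case using step.IH by (rule cong_trans)
  qed
qed

lemma assoc_l_constant_digits:
  assumes "prime p" and "s 1 = l" and "1 \<le> l" and "\<forall>\<nu>\<in>{2..Suc j}. s \<nu> = l - 1"
  shows "assoc_l p s (Suc j) = 1 + (l - 1) * p ^ j"
  using assms(4)
proof (induction j)
  case 0
  then show ?case using assms(2,3) by (simp add: assoc_l_def)
next
  case (Suc j)
  have "assoc_l p s (Suc (Suc j)) = 1 + (l - 1) * p ^ j + (l - 1) * (p ^ j * (p - 1))"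
    unfolding assoc_l_Suc[of p s "Suc j"] totient_prime_power_Suc[OF \<open>prime p\<close>] using Suc by simp
  also have "\<dots> = 1 + (l - 1) * (p ^ j * (1 + (p - 1)))" by (simp add: algebra_simps)
  also have "\<dots> = 1 + (l - 1) * p ^ Suc j"
    using prime_gt_0_nat[OF \<open>prime p\<close>] by (simp add: mult.commute)
  finally show ?case .
qed

lemma assoc_l_next_digit:
  assumes "prime p" and "s 1 = l" and "1 \<le> l" and "l \<le> p"
    and prefix: "\<forall>\<nu>\<in>{2..Suc j}. s \<nu> = l - 1" and "s (Suc (Suc j)) < p"
    and cong: "[assoc_l p s (Suc (Suc j)) = 1] (mod p ^ Suc j)"
  shows "s (Suc (Suc j)) = l - 1"
proof -
  define x where "x = s (Suc (Suc j))"
  define y where "y = (l - 1) + x * (p - 1)"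
  have "assoc_l p s (Suc (Suc j)) = 1 + p ^ j * y"
    unfolding assoc_l_Suc[of p s "Suc j"] totient_prime_power_Suc[OF \<open>prime p\<close>]
      assoc_l_constant_digits[OF assms(1-3) prefix]
    by (simp add: x_def y_def algebra_simps)
  with cong have "[1 + p ^ j * y = 1] (mod p ^ Suc j)" by (simp only:)
  then have "p ^ j * p dvd p ^ j * y"
    by (simp only: cong_add_lcancel_0_nat cong_0_iff power_Suc2)
  then have "p dvd y"
    using prime_gt_0_nat[OF \<open>prime p\<close>] by simp
  \<comment> \<open>\<open>y \<equiv> (l - 1) - x (mod p)\<close> and both digits lie in \<open>[0, p)\<close>\<close>
  have "(l - 1) + x * p = y + x"
    using prime_gt_0_nat[OF \<open>prime p\<close>] by (cases p) (simp_all add: y_def)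
  have "(l - 1) mod p = ((l - 1) + x * p) mod p" by simp
  also have "\<dots> = (y mod p + x) mod p" by (simp only: \<open>(l - 1) + x * p = y + x\<close> mod_add_left_eq)
  also have "\<dots> = x mod p" using \<open>p dvd y\<close> by simp
  finally have "(l - 1) mod p = x mod p" .
  then show ?thesis
    using \<open>s (Suc (Suc j)) < p\<close> \<open>1 \<le> l\<close> \<open>l \<le> p\<close> by (simp add: x_def)
qed

lemma assoc_l_cong_one_imp_constant_digits:
  assumes "prime p" and "s 1 = l" and "1 \<le> l" and "l \<le> p"
    and digits: "\<forall>\<nu>\<in>{1..u}. s \<nu> < p" and cong: "[assoc_l p s u = 1] (mod p ^ (u - 1))"
  shows "\<forall>\<nu>\<in>{2..u}. s \<nu> = l - 1"
proof -
  have "\<forall>\<nu>\<in>{2..Suc j}. s \<nu> = l - 1" if "j < u" for j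
    using that
  proof (induction j)
    case 0
    show ?case by simp
  next
    case (Suc j)
    then have prefix: "\<forall>\<nu>\<in>{2..Suc j}. s \<nu> = l - 1" by simp
    have "[assoc_l p s (Suc (Suc j)) = assoc_l p s u] (mod p ^ Suc j)"
      using assoc_l_cong_prefix[OF \<open>prime p\<close> \<open>Suc j < u\<close>] by (rule cong_sym)
    also have "[assoc_l p s u = 1] (mod p ^ Suc j)"
      by (rule cong_dvd_modulus_nat[OF cong le_imp_power_dvd]) (use \<open>Suc j < u\<close> in simp)
    finally have "s (Suc (Suc j)) = l - 1"
      using assoc_l_next_digit[OF assms(1-4) prefix] digits \<open>Suc j < u\<close> by simp
    with prefix show ?case by (auto simp: le_Suc_eq)
  qed
  from this[of "u - 1"] show ?thesis by (cases u) auto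
qed

theorem corollary3p5:
  fixes p l r :: nat and s :: "nat \<Rightarrow> nat"
  assumes "irregular_pair p l"
    and "Delta p l \<noteq> 0"
    and "s 1 = l"
    and "\<forall>n\<ge>1. assoc_pair n p s"
    and "r \<ge> 2"
    and "\<not> (\<forall>\<nu>\<in>{2..r}. s \<nu> = l - 1)"
  shows "\<forall>u\<ge>r. A_set p u (assoc_l p s u) = {}"
proof (intro allI impI)
  \<comment> \<open>\<open>Delta p l \<noteq> 0\<close> only ensures that such a sequence \<open>s\<close> exists; here \<open>s\<close> is given.\<close>
  fix u assume "u \<ge> r"
  have "prime p" and "1 \<le> l" and "l \<le> p"
    using assms(1) by (auto simp: irregular_pair_def)
  have "u \<ge> 1" using assms(5) \<open>u \<ge> r\<close> by simp
  then have digits: "\<forall>\<nu>\<in>{1..u}. s \<nu> < p"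
    using assms(4) by (simp add: assoc_pair_def)
  show "A_set p u (assoc_l p s u) = {}"
  proof (rule ccontr)
    assume "A_set p u (assoc_l p s u) \<noteq> {}"
    then have "[assoc_l p s u = 1] (mod p ^ (u - 1))"
      using A_set_nonempty_imp_cong_one \<open>prime p\<close> \<open>u \<ge> 1\<close> by simp
    then have "\<forall>\<nu>\<in>{2..u}. s \<nu> = l - 1"
      using assoc_l_cong_one_imp_constant_digits \<open>prime p\<close> assms(3) \<open>1 \<le> l\<close> \<open>l \<le> p\<close> digits
      by blast
    with assms(6) \<open>u \<ge> r\<close> show False by auto
  qed
qed

end
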